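(* Consider a 3-petal flower whose center coin has radius $1$ and whose outer coins have radii $r_1,r_2,r_3$, with internal angles $\theta_1,\theta_2,\theta_3$. Then $r_1,r_2,r_3$ are all rational if and only if $\cos\theta_i$ and $\sin\theta_i$ are rational for each $i=1,2,3$.
   Context: A 3-petal flower is a configuration of four closed disks (coins) in the Euclidean plane with pairwise disjoint interiors, a center coin and three outer coins, such that every two of the four coins are externally tangent. With center coin of radius $r$ and outer radii $r_1,r_2,r_3$, the internal angle $\theta_i$ ($i=1,2,3$, indices mod 3) is the angle at the center of the center coin between the centers of outer coins $i$ and $i+1$, so $\cos\theta_i=\frac{(r+r_i)^2+(r+r_{i+1})^2-(r_i+r_{i+1})^2}{2(r+r_i)(r+r_{i+1})}$ and $\theta_1+\theta_2+\theta_3=2\pi$. *)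

theory Defs
  imports Complex_Main
begin

text \<open>Internal angle of a 3-petal flower with center radius r, at the center of
the center coin, between the centers of the outer coins of radii a and b
(law of cosines in the triangle of centers, side lengths r+a, r+b, a+b).\<close>

definition petal_cos :: "real \<Rightarrow> real \<Rightarrow> real \<Rightarrow> real" where
  "petal_cos r a b =
     ((r + a)^2 + (r + b)^2 - (a + b)^2) / (2 * (r + a) * (r + b))"

definition petal_angle :: "real \<Rightarrow> real \<Rightarrow> real \<Rightarrow> real" where
  "petal_angle r a b = arccos (petal_cos r a b)"

definition three_petal_flower :: "real \<Rightarrow> real \<Rightarrow> real \<Rightarrow> real \<Rightarrow> bool" where
  "three_petal_flower r r1 r2 r3 \<longleftrightarrow>
     r > 0 \<and> r1 > 0 \<and> r2 > 0 \<and> r3 > 0 \<and>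
     petal_angle r r1 r2 + petal_angle r r2 r3 + petal_angle r r3 r1 = 2 * pi"

end

theory Submission imports Defs begin

(* Put x_i = r_i/(1+r_i) and t_i = cot(theta_i/2).
   (1) The law of cosines gives cos theta_i = 1 - 2 x_i x_(i+1), so every internal
       angle lies strictly between 0 and pi, and via the half-angle formula
       1 - cos theta = 2/(1+t^2) we get  x_i x_(i+1) (1 + t_i^2) = 1.
   (2) The half angles sum to pi, so the cotangents satisfy
       t_1 t_2 + t_2 t_3 + t_3 t_1 = 1, hence 1 + t_1^2 = (t_1+t_2)(t_1+t_3) etc.
       Combining with (1) yields  x_1 = 1/(t_1+t_3),  x_2 = 1/(t_1+t_2),
       x_3 = 1/(t_2+t_3), an invertible rational change of variables.
   (3) By the Weierstrass substitution cos theta and sin theta are rational iff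
       cot(theta/2) is, and r is rational iff r/(1+r) is.
   The theorem is the chain r_i rational <-> x_i rational <-> t_i rational
   <-> cos theta_i, sin theta_i rational. *)

lemma petal_cos_ratio:
  fixes r a b :: real
  assumes "r + a \<noteq> 0" "r + b \<noteq> 0"
  shows "petal_cos r a b = 1 - 2 * (a / (r + a)) * (b / (r + b))"
proof -
  define D where "D = (r + a) * (r + b)"
  have "D \<noteq> 0" unfolding D_def using assms by simp
  have num: "(r + a)^2 + (r + b)^2 - (a + b)^2 = 2 * D - 4 * (a * b)"
    unfolding D_def by (simp add: algebra_simps power2_eq_square)
  have "petal_cos r a b = (2 * D - 4 * (a * b)) / (2 * D)"
    unfolding petal_cos_def num D_def by (simp add: mult.assoc)
  also have "\<dots> = 1 - 2 * (a * b / D)"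
    using \<open>D \<noteq> 0\<close> by (simp add: diff_divide_distrib)
  also have "a * b / D = (a / (r + a)) * (b / (r + b))"
    unfolding D_def by simp
  finally show ?thesis by simp
qed

lemma petal_angle_bounds:
  fixes r a b :: real
  assumes "r > 0" "a > 0" "b > 0"
  defines "\<theta> \<equiv> petal_angle r a b"
  shows "cos \<theta> = 1 - 2 * (a / (r + a)) * (b / (r + b))" "0 < \<theta>" "\<theta> < pi"
proof -
  define p where "p = (a / (r + a)) * (b / (r + b))"
  have ra: "0 < a / (r + a)" "a / (r + a) < 1" and rb: "0 < b / (r + b)" "b / (r + b) < 1"
    using assms by auto
  have "0 < p" unfolding p_def using ra(1) rb(1) by (rule mult_pos_pos)
  moreover have "p < 1 * 1"
    unfolding p_def by (rule mult_strict_mono) (use ra rb in auto)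
  moreover have c: "petal_cos r a b = 1 - 2 * p"
    unfolding p_def using assms petal_cos_ratio[of r a b] by (simp add: mult.assoc)
  ultimately have "-1 < petal_cos r a b" "petal_cos r a b < 1" by auto
  then have "cos \<theta> = petal_cos r a b" "0 < \<theta>" "\<theta> < pi"
    unfolding \<theta>_def petal_angle_def by (auto simp: arccos_lt_bounded)
  then show "cos \<theta> = 1 - 2 * (a / (r + a)) * (b / (r + b))" "0 < \<theta>" "\<theta> < pi"
    using c unfolding p_def by (simp_all add: mult.assoc)
qed

lemma cos_sin_half_cot:
  fixes \<theta> :: real
  assumes "sin (\<theta> / 2) \<noteq> 0"
  defines "t \<equiv> cot (\<theta> / 2)"
  shows "cos \<theta> = (t^2 - 1) / (t^2 + 1)" "sin \<theta> = 2 * t / (t^2 + 1)"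
proof -
  define s c where "s = sin (\<theta> / 2)" and "c = cos (\<theta> / 2)"
  have "s \<noteq> 0" unfolding s_def by (rule assms(1))
  have pyth: "s^2 + c^2 = 1" unfolding s_def c_def by (rule sin_cos_squared_add)
  have t: "t = c / s" unfolding t_def cot_def s_def c_def ..
  have tp: "t^2 + 1 = 1 / s^2"
    unfolding t using \<open>s \<noteq> 0\<close> pyth by (simp add: field_simps power_divide)
  have tm: "t^2 - 1 = (c^2 - s^2) / s^2"
    unfolding t using \<open>s \<noteq> 0\<close> by (simp add: field_simps power_divide)
  have "cos \<theta> = c^2 - s^2"
    using cos_double[of "\<theta>/2"] unfolding s_def c_def by simp
  then show "cos \<theta> = (t^2 - 1) / (t^2 + 1)"
    unfolding tp tm using \<open>s \<noteq> 0\<close> by simp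
  have "sin \<theta> = 2 * s * c"
    using sin_double[of "\<theta>/2"] unfolding s_def c_def by simp
  then show "sin \<theta> = 2 * t / (t^2 + 1)"
    unfolding tp unfolding t using \<open>s \<noteq> 0\<close> by (simp add: power2_eq_square)
qed

lemma rational_cos_sin_iff_half_cot:
  fixes \<theta> :: real
  assumes "0 < \<theta>" "\<theta> < pi"
  shows "(cos \<theta> \<in> \<rat> \<and> sin \<theta> \<in> \<rat>) \<longleftrightarrow> cot (\<theta> / 2) \<in> \<rat>"
proof -
  have "sin (\<theta>/2) > 0" using assms by (intro sin_gt_zero) auto
  note W = cos_sin_half_cot[OF less_imp_neq[OF this, symmetric]]
  have "sin \<theta> > 0" using assms by (rule sin_gt_zero)
  have "(cot (\<theta>/2))^2 + 1 > 0" by (simp add: add_nonneg_pos)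
  then have "1 + cos \<theta> = cot (\<theta>/2) * sin \<theta>"
    unfolding W by (simp add: field_simps power2_eq_square)
  then have cot_eq: "cot (\<theta>/2) = (1 + cos \<theta>) / sin \<theta>"
    using \<open>sin \<theta> > 0\<close> by simp
  show ?thesis
  proof
    assume "cos \<theta> \<in> \<rat> \<and> sin \<theta> \<in> \<rat>"
    then show "cot (\<theta>/2) \<in> \<rat>" unfolding cot_eq by simp
  next
    assume "cot (\<theta>/2) \<in> \<rat>"
    then show "cos \<theta> \<in> \<rat> \<and> sin \<theta> \<in> \<rat>" unfolding W by simp
  qed
qed

lemma petal_half_cot:
  fixes r a b :: real
  assumes "r > 0" "a > 0" "b > 0"
  defines "t \<equiv> cot (petal_angle r a b / 2)"
  shows "(1 + t^2) * ((a / (r + a)) * (b / (r + b))) = 1" "t > 0"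
proof -
  define \<theta> where "\<theta> = petal_angle r a b"
  note B = petal_angle_bounds[OF assms(1-3), folded \<theta>_def]
  have "0 < \<theta>/2" "\<theta>/2 < pi/2" using B(2,3) by auto
  then have s: "sin (\<theta>/2) > 0" and "cos (\<theta>/2) > 0"
    by (auto intro: sin_gt_zero cos_gt_zero)
  then show "t > 0" unfolding t_def \<theta>_def[symmetric] cot_def by simp
  define p where "p = (a / (r + a)) * (b / (r + b))"
  have "t^2 + 1 > 0" by (simp add: add_nonneg_pos)
  moreover have "cos \<theta> = (t^2 - 1) / (t^2 + 1)"
    unfolding t_def \<theta>_def[symmetric] using s by (simp add: cos_sin_half_cot)
  ultimately have "(t^2 + 1) * (1 - cos \<theta>) = 2" by (simp add: field_simps)
  moreover have "1 - cos \<theta> = 2 * p" unfolding B(1) p_def by simp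
  ultimately show "(1 + t^2) * ((a / (r + a)) * (b / (r + b))) = 1"
    unfolding p_def[symmetric] by (simp add: algebra_simps)
qed

lemma cot_triangle_identity:
  fixes a1 a2 a3 :: real
  assumes "a1 + a2 + a3 = pi" "sin a1 \<noteq> 0" "sin a2 \<noteq> 0" "sin a3 \<noteq> 0"
  shows "cot a1 * cot a2 + cot a2 * cot a3 + cot a3 * cot a1 = 1"
proof -
  have a3: "a3 = pi - (a1 + a2)" using assms(1) by simp
  have s3: "sin a3 = sin a1 * cos a2 + cos a1 * sin a2" unfolding a3 by (simp add: sin_add)
  have c3: "cos a3 = sin a1 * sin a2 - cos a1 * cos a2" unfolding a3 by (simp add: cos_add)
  have "cos a1 * cos a2 * sin a3 + cos a2 * cos a3 * sin a1 + cos a3 * cos a1 * sin a2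
        = sin a1 * sin a2 * sin a3"
    unfolding c3 s3 by (simp add: algebra_simps power2_eq_square)
  then show ?thesis using assms(2-4) unfolding cot_def by (simp add: field_simps)
qed

lemma ratio_from_cotangents:
  fixes x y z t1 t2 t3 :: real
  assumes pos: "x > 0" "t1 > 0" "t3 > 0"
    and e1: "(1 + t1^2) * (x * y) = 1" and e2: "(1 + t2^2) * (y * z) = 1"
    and e3: "(1 + t3^2) * (z * x) = 1"
    and cl: "t1 * t2 + t2 * t3 + t3 * t1 = 1"
  shows "x = 1 / (t1 + t3)"
proof -
  have f1: "1 + t1^2 = (t1 + t2) * (t1 + t3)"
   and f2: "1 + t2^2 = (t1 + t2) * (t2 + t3)"
   and f3: "1 + t3^2 = (t1 + t3) * (t2 + t3)"
    using cl by (simp_all add: algebra_simps power2_eq_square)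
  have "(x * (t1 + t3))^2 * ((1 + t2^2) * (y * z)) = ((1 + t1^2) * (x * y)) * ((1 + t3^2) * (z * x))"
    unfolding f1 f2 f3 unfolding power2_eq_square by algebra
  then have "(x * (t1 + t3))^2 = 1" by (simp only: e1 e2 e3 mult_1_right)
  moreover have "x * (t1 + t3) > 0" using pos by simp
  ultimately have "x * (t1 + t3) = 1" by (simp add: power2_eq_1_iff)
  then show ?thesis using pos by (simp add: field_simps)
qed

lemma rational_ratios_iff_cotangents:
  fixes x y z t1 t2 t3 :: real
  assumes "x = 1 / (t1 + t3)" "y = 1 / (t1 + t2)" "z = 1 / (t2 + t3)"
  shows "(x \<in> \<rat> \<and> y \<in> \<rat> \<and> z \<in> \<rat>) \<longleftrightarrow> (t1 \<in> \<rat> \<and> t2 \<in> \<rat> \<and> t3 \<in> \<rat>)"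
proof
  assume xyz: "x \<in> \<rat> \<and> y \<in> \<rat> \<and> z \<in> \<rat>"
  have "1/x = t1 + t3" "1/y = t1 + t2" "1/z = t2 + t3"
    using assms by simp_all
  then have t: "t1 = (1/x + 1/y - 1/z) / 2" "t2 = (1/y + 1/z - 1/x) / 2"
    "t3 = (1/x + 1/z - 1/y) / 2"
    by simp_all
  show "t1 \<in> \<rat> \<and> t2 \<in> \<rat> \<and> t3 \<in> \<rat>" unfolding t using xyz by simp
next
  assume "t1 \<in> \<rat> \<and> t2 \<in> \<rat> \<and> t3 \<in> \<rat>"
  then show "x \<in> \<rat> \<and> y \<in> \<rat> \<and> z \<in> \<rat>" using assms by simp
qed

lemma rational_iff_ratio:
  fixes r :: real
  assumes "1 + r \<noteq> 0"
  shows "r \<in> \<rat> \<longleftrightarrow> r / (1 + r) \<in> \<rat>"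
proof
  assume "r / (1 + r) \<in> \<rat>"
  moreover have "r = (r / (1 + r)) / (1 - r / (1 + r))"
    using assms by (simp add: field_simps)
  ultimately show "r \<in> \<rat>" by (metis Rats_1 Rats_diff Rats_divide)
qed simp

theorem mainTheorem15:
  fixes r1 r2 r3 :: real
  assumes "three_petal_flower 1 r1 r2 r3"
  defines "\<theta>1 \<equiv> petal_angle 1 r1 r2"
      and "\<theta>2 \<equiv> petal_angle 1 r2 r3"
      and "\<theta>3 \<equiv> petal_angle 1 r3 r1"
  shows "(r1 \<in> \<rat> \<and> r2 \<in> \<rat> \<and> r3 \<in> \<rat>) \<longleftrightarrow>
         (cos \<theta>1 \<in> \<rat> \<and> sin \<theta>1 \<in> \<rat> \<and> cos \<theta>2 \<in> \<rat> \<and> sin \<theta>2 \<in> \<rat> \<and>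
          cos \<theta>3 \<in> \<rat> \<and> sin \<theta>3 \<in> \<rat>)"
proof -
  have pos: "r1 > 0" "r2 > 0" "r3 > 0" and sum: "\<theta>1 + \<theta>2 + \<theta>3 = 2 * pi"
    using assms(1) unfolding three_petal_flower_def \<theta>1_def \<theta>2_def \<theta>3_def by auto
  define x y z where "x = r1 / (1 + r1)" and "y = r2 / (1 + r2)" and "z = r3 / (1 + r3)"
  define t1 t2 t3 where "t1 = cot (\<theta>1 / 2)" and "t2 = cot (\<theta>2 / 2)" and "t3 = cot (\<theta>3 / 2)"
  note P1 = petal_half_cot[OF zero_less_one pos(1,2), folded \<theta>1_def, folded t1_def x_def y_def]
  note P2 = petal_half_cot[OF zero_less_one pos(2,3), folded \<theta>2_def, folded t2_def y_def z_def]
  note P3 = petal_half_cot[OF zero_less_one pos(3,1), folded \<theta>3_def, folded t3_def z_def x_def]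
  note A1 = petal_angle_bounds(2,3)[OF zero_less_one pos(1,2), folded \<theta>1_def]
  note A2 = petal_angle_bounds(2,3)[OF zero_less_one pos(2,3), folded \<theta>2_def]
  note A3 = petal_angle_bounds(2,3)[OF zero_less_one pos(3,1), folded \<theta>3_def]
  have half_sin: "sin (\<theta>/2) \<noteq> 0" if "0 < \<theta>" "\<theta> < pi" for \<theta> :: real
    using that sin_gt_zero[of "\<theta>/2"] by simp
  have "sin (\<theta>1/2) \<noteq> 0" "sin (\<theta>2/2) \<noteq> 0" "sin (\<theta>3/2) \<noteq> 0"
    using half_sin A1 A2 A3 by blast+
  then have cl: "t1 * t2 + t2 * t3 + t3 * t1 = 1"
    unfolding t1_def t2_def t3_def using sum by (intro cot_triangle_identity) simp_all
  have "x > 0" "y > 0" "z > 0" unfolding x_def y_def z_def using pos by auto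
  then have "x = 1 / (t1 + t3)" "y = 1 / (t1 + t2)" "z = 1 / (t2 + t3)"
    using ratio_from_cotangents[of x t1 t3 y t2 z] ratio_from_cotangents[of y t2 t1 z t3 x]
      ratio_from_cotangents[of z t3 t2 x t1 y] P1 P2 P3 cl
    by (simp_all add: algebra_simps)
  then have "(x \<in> \<rat> \<and> y \<in> \<rat> \<and> z \<in> \<rat>) \<longleftrightarrow> (t1 \<in> \<rat> \<and> t2 \<in> \<rat> \<and> t3 \<in> \<rat>)"
    by (rule rational_ratios_iff_cotangents)
  moreover have "r \<in> \<rat> \<longleftrightarrow> r / (1 + r) \<in> \<rat>" if "r > 0" for r :: real
    using that by (intro rational_iff_ratio) simp
  ultimately show ?thesis
    unfolding t1_def t2_def t3_def x_def y_def z_def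
    using pos rational_cos_sin_iff_half_cot[OF A1] rational_cos_sin_iff_half_cot[OF A2]
      rational_cos_sin_iff_half_cot[OF A3]
    by blast
qed

end
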